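(* Let $(X,d)$ be a proper metric space and let $X+_fW$ be a Hausdorff compactification of $X$ with the coarse Karlsson property. Then $X+_fW\in\mathrm{Pers}(\varepsilon_d)$, i.e. every $e\in\varepsilon_d$ is perspective for $X+_fW$.
   Context: $X+_fW$ denotes $X\sqcup W$ with closed sets the $D$ such that $D\cap X$ is closed in $X$, $D\cap W$ closed in $W$ and $f(D\cap X)\subseteq D$, for an admissible $f$ (sending $\emptyset$ to $\emptyset$ and preserving finite unions) from closed sets of $X$ to closed sets of $W$; here it is compact Hausdorff with $X$ dense. $\mathfrak{U}_f$ is the unique uniform structure of $X+_fW$; a set $S$ is $u$-small if $S\times S\subseteq u$. $\varepsilon_d$ is the bounded coarse structure: all $e\subseteq X\times X$ with $\sup\{d(x,y):(x,y)\in e\}<\infty$. A set $e\subseteq X\times X$ is perspective if $\mathrm{Cl}_{(X+_fW)^2}(e)\cap((X+_fW)^2-X^2)\subseteq\{(p,p):p\in W\}$; $\mathrm{Pers}(\varepsilon_d)$ consists of Hausdorff compactifications for which every element of $\varepsilon_d$ is perspective. A coarse arc between $x,y\in X$ is a map $\lambda:[0,t]\to X$ which is a coarse embedding for the metric coarse structures, with $\lambda(0)=x$, $\lambda(t)=y$. A set $\Upsilon$ of coarse arcs is equicoarse if (1) for every $r>0$ there is $s>0$ with $d(\lambda(a),\lambda(b))<s$ whenever $\lambda\in\Upsilon$, $a,b\in\mathrm{dom}\,\lambda$, $|a-b|<r$; and (2) for every $r>0$ there is $s>0$ with $|a-b|<s$ whenever $\lambda\in\Upsilon$ and $d(\lambda(a),\lambda(b))<r$.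 $X+_fW$ has the coarse Karlsson property if there is an equicoarse set $\Upsilon$ containing, for all $x,y\in X$, a coarse arc between $x$ and $y$, such that for every $u\in\mathfrak{U}_f$ there is a bounded $S\subseteq X$ such that every arc in $\Upsilon$ whose image does not meet $S$ has $u$-small image. *)

theory Defs
  imports "HOL-Analysis.Analysis"
begin

text \<open>The space X is the whole type 'a (a metric space); W is the carrier of a topology TW
on 'b. The set X + W is modelled as the disjoint sum 'a + 'b (Inl = X, Inr = W).\<close>

definition proper_metric :: "'a::metric_space itself \<Rightarrow> bool" where
  "proper_metric _ \<longleftrightarrow> (\<forall>S::'a set. bounded S \<and> closed S \<longrightarrow> compact S)"

definition sum_carrier :: "'b topology \<Rightarrow> ('a + 'b) set" where
  "sum_carrier TW = range Inl \<union> Inr ` topspace TW"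

definition admissible :: "('a::metric_space set \<Rightarrow> 'b set) \<Rightarrow> 'b topology \<Rightarrow> bool" where
  "admissible f TW \<longleftrightarrow>
     (\<forall>A. closed A \<longrightarrow> closedin TW (f A)) \<and> f {} = {} \<and>
     (\<forall>A B. closed A \<longrightarrow> closed B \<longrightarrow> f (A \<union> B) = f A \<union> f B)"

definition sum_closed :: "('a::metric_space set \<Rightarrow> 'b set) \<Rightarrow> 'b topology \<Rightarrow> ('a + 'b) set \<Rightarrow> bool" where
  "sum_closed f TW D \<longleftrightarrow> D \<subseteq> sum_carrier TW \<and> closed (Inl -` D) \<and>
     closedin TW (Inr -` D) \<and> f (Inl -` D) \<subseteq> Inr -` D"

definition sum_top :: "('a::metric_space set \<Rightarrow> 'b set) \<Rightarrow> 'b topology \<Rightarrow> ('a + 'b) topology" where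
  "sum_top f TW = topology (\<lambda>U. U \<subseteq> sum_carrier TW \<and> sum_closed f TW (sum_carrier TW - U))"

definition hausdorff_compactification :: "('a::metric_space set \<Rightarrow> 'b set) \<Rightarrow> 'b topology \<Rightarrow> bool" where
  "hausdorff_compactification f TW \<longleftrightarrow>
     istopology (\<lambda>U. U \<subseteq> sum_carrier TW \<and> sum_closed f TW (sum_carrier TW - U)) \<and>
     compact_space (sum_top f TW) \<and> Hausdorff_space (sum_top f TW) \<and>
     (sum_top f TW) closure_of (range Inl) = topspace (sum_top f TW)"

text \<open>The unique uniform structure of a compact Hausdorff space: the neighbourhoods of the
diagonal in the product.\<close>
definition unif :: "'c topology \<Rightarrow> ('c \<times> 'c) set set" where
  "unif T = {u. u \<subseteq> topspace T \<times> topspace T \<and>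
      (\<exists>V. openin (prod_topology T T) V \<and> (\<forall>p\<in>topspace T. (p, p) \<in> V) \<and> V \<subseteq> u)}"

definition small :: "('c \<times> 'c) set \<Rightarrow> 'c set \<Rightarrow> bool" where
  "small u S \<longleftrightarrow> S \<times> S \<subseteq> u"

definition bounded_coarse :: "('a::metric_space \<times> 'a) set set" where
  "bounded_coarse = {e. \<exists>R. \<forall>(x, y)\<in>e. dist x y \<le> R}"

definition perspective :: "('a::metric_space set \<Rightarrow> 'b set) \<Rightarrow> 'b topology \<Rightarrow> ('a \<times> 'a) set \<Rightarrow> bool" where
  "perspective f TW e \<longleftrightarrow>
     ((prod_topology (sum_top f TW) (sum_top f TW)) closure_of ((\<lambda>(x, y). (Inl x, Inl y)) ` e))
       \<inter> ((sum_carrier TW \<times> sum_carrier TW) - (range Inl \<times> range Inl))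
     \<subseteq> {(p, p) | p. p \<in> Inr ` topspace TW}"

definition Pers :: "('a::metric_space set \<Rightarrow> 'b set) \<Rightarrow> 'b topology \<Rightarrow> bool" where
  "Pers f TW \<longleftrightarrow> hausdorff_compactification f TW \<and> (\<forall>e\<in>bounded_coarse. perspective f TW e)"

definition coarse_embedding_on :: "real set \<Rightarrow> (real \<Rightarrow> 'a::metric_space) \<Rightarrow> bool" where
  "coarse_embedding_on D lam \<longleftrightarrow>
     (\<forall>r>0. \<exists>s>0. \<forall>a\<in>D. \<forall>b\<in>D. \<bar>a - b\<bar> < r \<longrightarrow> dist (lam a) (lam b) < s) \<and>
     (\<forall>r>0. \<exists>s>0. \<forall>a\<in>D. \<forall>b\<in>D. dist (lam a) (lam b) < r \<longrightarrow> \<bar>a - b\<bar> < s)"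

definition coarse_arc :: "real \<times> (real \<Rightarrow> 'a::metric_space) \<Rightarrow> 'a \<Rightarrow> 'a \<Rightarrow> bool" where
  "coarse_arc ca x y \<longleftrightarrow> (case ca of (t, lam) \<Rightarrow>
     0 \<le> t \<and> coarse_embedding_on {0..t} lam \<and> lam 0 = x \<and> lam t = y)"

definition arc_image :: "real \<times> (real \<Rightarrow> 'a) \<Rightarrow> 'a set" where
  "arc_image ca = (case ca of (t, lam) \<Rightarrow> lam ` {0..t})"

definition equicoarse :: "(real \<times> (real \<Rightarrow> 'a::metric_space)) set \<Rightarrow> bool" where
  "equicoarse U \<longleftrightarrow>
     (\<forall>r>0. \<exists>s>0. \<forall>(t, lam)\<in>U. \<forall>a\<in>{0..t}. \<forall>b\<in>{0..t}. \<bar>a - b\<bar> < r \<longrightarrow> dist (lam a) (lam b) < s) \<and>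
     (\<forall>r>0. \<exists>s>0. \<forall>(t, lam)\<in>U. \<forall>a\<in>{0..t}. \<forall>b\<in>{0..t}. dist (lam a) (lam b) < r \<longrightarrow> \<bar>a - b\<bar> < s)"

definition coarse_Karlsson :: "('a::metric_space set \<Rightarrow> 'b set) \<Rightarrow> 'b topology \<Rightarrow> bool" where
  "coarse_Karlsson f TW \<longleftrightarrow>
     (\<exists>U::(real \<times> (real \<Rightarrow> 'a)) set. (\<forall>ca\<in>U. \<exists>x y. coarse_arc ca x y) \<and> equicoarse U \<and>
          (\<forall>x y. \<exists>ca\<in>U. coarse_arc ca x y) \<and>
          (\<forall>u\<in>unif (sum_top f TW). \<exists>S. bounded S \<and>
              (\<forall>ca\<in>U. arc_image ca \<inter> S = {} \<longrightarrow> small u (Inl ` arc_image ca))))"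

end

theory Submission
  imports Defs
begin

text \<open>Let \<open>(p, q)\<close> be a limit point of a bounded relation \<open>e\<close> outside \<open>X \<times> X\<close>. If \<open>p\<close> lies in
  \<open>X\<close>, the pairs of \<open>e\<close> near \<open>p\<close> have their second coordinates in a compact ball of \<open>X\<close>, so \<open>q\<close>
  lies in \<open>X\<close> too. Hence \<open>p\<close> lies in \<open>W\<close>, and pairs \<open>(a, b)\<close> of \<open>e\<close> converging to \<open>(p, q)\<close> escape
  every bounded set. By equicoarseness the arcs joining \<open>a\<close> to \<open>b\<close> stay within a uniformly bounded
  distance of \<open>a\<close>, so they escape every bounded set as well, and the coarse Karlsson property
  makes them \<open>u\<close>-small for every entourage \<open>u\<close>. Taking \<open>u\<close> to separate two distinct points then
  forces \<open>p = q\<close>.\<close>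

lemma openin_sum_top:
  assumes "hausdorff_compactification f TW"
  shows "openin (sum_top f TW) U \<longleftrightarrow> U \<subseteq> sum_carrier TW \<and> sum_closed f TW (sum_carrier TW - U)"
  using assms unfolding hausdorff_compactification_def sum_top_def by simp

lemma topspace_sum_top:
  assumes "admissible f TW" "hausdorff_compactification f TW"
  shows "topspace (sum_top f TW) = sum_carrier TW"
proof -
  have "openin (sum_top f TW) (sum_carrier TW)"
    using assms by (simp add: openin_sum_top sum_closed_def admissible_def)
  then have "sum_carrier TW \<subseteq> topspace (sum_top f TW)"
    by (rule openin_subset)
  moreover have "topspace (sum_top f TW) \<subseteq> sum_carrier TW"
    using openin_sum_top[OF assms(2), of "topspace (sum_top f TW)"] by simp
  ultimately show ?thesis by blast
qed

lemma closedin_sum_top: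
  assumes "admissible f TW" "hausdorff_compactification f TW"
  shows "closedin (sum_top f TW) D \<longleftrightarrow> sum_closed f TW D"
proof -
  have "D \<subseteq> sum_carrier TW \<Longrightarrow> sum_carrier TW - (sum_carrier TW - D) = D"
    by blast
  then show ?thesis
    unfolding closedin_def topspace_sum_top[OF assms] openin_sum_top[OF assms(2)]
    by (auto simp: sum_closed_def)
qed

lemma continuous_map_Inl_sum_top:
  assumes "admissible f TW" "hausdorff_compactification f TW"
  shows "continuous_map euclidean (sum_top f TW) Inl"
  unfolding continuous_map_closedin closedin_sum_top[OF assms] topspace_sum_top[OF assms]
  by (auto simp: sum_carrier_def sum_closed_def vimage_def)

lemma closedin_sum_top_Inl_compact:
  assumes "admissible f TW" "hausdorff_compactification f TW" "compact C"
  shows "closedin (sum_top f TW) (Inl ` C)"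
proof (rule compactin_imp_closedin)
  show "Hausdorff_space (sum_top f TW)"
    using assms(2) by (simp add: hausdorff_compactification_def)
  show "compactin (sum_top f TW) (Inl ` C)"
    using image_compactin[OF _ continuous_map_Inl_sum_top[OF assms(1,2)]] assms(3) by simp
qed

lemma openin_sum_top_Inl_open:
  assumes "admissible f TW" "hausdorff_compactification f TW" "open A"
  shows "openin (sum_top f TW) (Inl ` A)"
proof -
  have complement: "sum_carrier TW - Inl ` A = Inl ` (- A) \<union> Inr ` topspace TW"
    by (auto simp: sum_carrier_def)
  have "closedin TW (f (- A))"
    using assms(1,3) by (simp add: admissible_def closed_def)
  then have "f (- A) \<subseteq> topspace TW"
    by (rule closedin_subset)
  moreover have "Inl -` (Inl ` (- A) \<union> Inr ` topspace TW) = - A"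
    "Inr -` (Inl ` (- A) \<union> Inr ` topspace TW) = topspace TW"
    by auto
  ultimately show ?thesis
    unfolding openin_sum_top[OF assms(2)] complement sum_closed_def
    using assms(3) by (auto simp: sum_carrier_def closed_def)
qed

lemma closure_of_Inl_pairs_meets_Times:
  assumes "(p, q) \<in> prod_topology X Y closure_of (\<lambda>(x, y). (Inl x, Inl y)) ` e"
    and "openin X A" "openin Y B" "p \<in> A" "q \<in> B"
  obtains a b where "(a, b) \<in> e" "Inl a \<in> A" "Inl b \<in> B"
proof -
  have "openin (prod_topology X Y) (A \<times> B)" "(p, q) \<in> A \<times> B"
    using assms(2-5) by (simp_all add: openin_prod_Times_iff)
  then obtain z where "z \<in> (\<lambda>(x, y). (Inl x, Inl y)) ` e" "z \<in> A \<times> B"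
    using assms(1) unfolding in_closure_of by (meson conjE)
  then obtain a b where "(a, b) \<in> e" "(Inl a, Inl b) \<in> A \<times> B"
    by (auto split: prod.splits)
  then show thesis
    using that by simp
qed

lemma Hausdorff_regular_separation_closure_of:
  assumes "Hausdorff_space X" "regular_space X" "p \<in> topspace X" "q \<in> topspace X" "p \<noteq> q"
  obtains V1 V2 where "openin X V1" "openin X V2" "p \<in> V1" "q \<in> V2"
    "disjnt (X closure_of V1) (X closure_of V2)"
proof -
  obtain U1 U2 where U: "openin X U1" "openin X U2" "p \<in> U1" "q \<in> U2" "disjnt U1 U2"
    using assms(1,3-5) unfolding Hausdorff_space_def by meson
  have inside: "\<exists>V. openin X V \<and> x \<in> V \<and> X closure_of V \<subseteq> U"
    if "openin X U" "x \<in> U" for U x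
  proof -
    have "closedin X (topspace X - U)" "x \<in> topspace X - (topspace X - U)"
      using that openin_subset by blast+
    then obtain V where "openin X V" "x \<in> V" "disjnt (topspace X - U) (X closure_of V)"
      using assms(2) unfolding regular_space by meson
    then show ?thesis
      using closure_of_subset_topspace by (fastforce simp: disjnt_def)
  qed
  obtain V1 V2 where "openin X V1" "p \<in> V1" "X closure_of V1 \<subseteq> U1"
    "openin X V2" "q \<in> V2" "X closure_of V2 \<subseteq> U2"
    using inside[OF U(1,3)] inside[OF U(2,4)] by blast
  then show thesis
    using that U(5) by (meson disjnt_subset1 disjnt_subset2)
qed

lemma Diff_Times_closedin_in_unif:
  assumes "closedin X F1" "closedin X F2" "disjnt F1 F2"
  shows "topspace X \<times> topspace X - F1 \<times> F2 \<in> unif X"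
  unfolding unif_def
proof (intro CollectI conjI exI)
  show "openin (prod_topology X X) (topspace X \<times> topspace X - F1 \<times> F2)"
    using assms(1,2) by (metis closedin_prod_Times_iff openin_diff openin_topspace
        topspace_prod_topology)
  show "\<forall>p\<in>topspace X. (p, p) \<in> topspace X \<times> topspace X - F1 \<times> F2"
    using assms(3) by (auto simp: disjnt_def)
qed auto

lemma coarse_arc_ends_in_arc_image:
  assumes "coarse_arc ca x y"
  shows "x \<in> arc_image ca" "y \<in> arc_image ca"
proof -
  obtain t lam where ca: "ca = (t, lam)" "0 \<le> t" "lam 0 = x" "lam t = y"
    using assms by (auto simp: coarse_arc_def split: prod.splits)
  then have "lam 0 \<in> lam ` {0..t}" "lam t \<in> lam ` {0..t}"
    by auto
  then show "x \<in> arc_image ca" "y \<in> arc_image ca"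
    using ca by (simp_all add: arc_image_def)
qed

lemma equicoarse_arc_image_subset_ball:
  assumes "equicoarse U" "r > 0"
  obtains s where "\<And>ca a b. ca \<in> U \<Longrightarrow> coarse_arc ca a b \<Longrightarrow> dist a b < r \<Longrightarrow>
    arc_image ca \<subseteq> ball a s"
proof -
  note equi = assms(1)[unfolded equicoarse_def]
  obtain s1 where "s1 > 0" and s1: "\<forall>(t, lam)\<in>U. \<forall>a\<in>{0..t}. \<forall>b\<in>{0..t}.
      dist (lam a) (lam b) < r \<longrightarrow> \<bar>a - b\<bar> < s1"
    using conjunct2[OF equi] assms(2) by blast
  obtain s where s: "\<forall>(t, lam)\<in>U. \<forall>a\<in>{0..t}. \<forall>b\<in>{0..t}.
      \<bar>a - b\<bar> < s1 \<longrightarrow> dist (lam a) (lam b) < s"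
    using conjunct1[OF equi] \<open>s1 > 0\<close> by blast
  have "arc_image ca \<subseteq> ball a s"
    if "ca \<in> U" "coarse_arc ca a b" "dist a b < r" for ca a b
  proof -
    obtain t lam where ca: "ca = (t, lam)"
      by fastforce
    have ends: "0 \<le> t" "lam 0 = a" "lam t = b"
      using that(2) by (simp_all add: ca coarse_arc_def)
    then have "t < s1"
      using bspec[OF s1 that(1)] that(3) by (force simp: ca)
    then have "dist a (lam c) < s" if "c \<in> {0..t}" for c
      using bspec[OF s \<open>ca \<in> U\<close>] ends that by (force simp: ca)
    then show ?thesis
      by (auto simp: ca arc_image_def)
  qed
  then show thesis
    by (rule that)
qed

lemma coarse_Karlsson_far_pairs_in_unif:
  assumes "coarse_Karlsson f TW" "u \<in> unif (sum_top f TW)"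
  obtains x0 N where "\<And>a b. dist a b \<le> R \<Longrightarrow> N < dist x0 a \<Longrightarrow> (Inl a, Inl b) \<in> u"
proof -
  obtain Ups :: "(real \<times> (real \<Rightarrow> 'a)) set" where Ups: "equicoarse Ups"
      "\<And>x y. \<exists>ca\<in>Ups. coarse_arc ca x y"
      "\<And>u. u \<in> unif (sum_top f TW) \<Longrightarrow> \<exists>S. bounded S \<and>
          (\<forall>ca\<in>Ups. arc_image ca \<inter> S = {} \<longrightarrow> small u (Inl ` arc_image ca))"
    using assms(1) unfolding coarse_Karlsson_def by blast
  obtain S where "bounded S" and small_arcs:
      "\<And>ca. ca \<in> Ups \<Longrightarrow> arc_image ca \<inter> S = {} \<Longrightarrow> small u (Inl ` arc_image ca)"
    using Ups(3)[OF assms(2)] by blast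
  then obtain x0 M where S: "S \<subseteq> cball x0 M"
    by (meson bounded_subset_cball)
  obtain s where arcs_near: "\<And>ca a b. ca \<in> Ups \<Longrightarrow> coarse_arc ca a b \<Longrightarrow> dist a b < \<bar>R\<bar> + 1 \<Longrightarrow>
      arc_image ca \<subseteq> ball a s"
    using equicoarse_arc_image_subset_ball[OF Ups(1), of "\<bar>R\<bar> + 1"] by force
  have "(Inl a, Inl b) \<in> u" if "dist a b \<le> R" "M + s < dist x0 a" for a b
  proof -
    obtain ca where ca: "ca \<in> Ups" "coarse_arc ca a b"
      using Ups(2) by blast
    have image: "arc_image ca \<subseteq> ball a s"
      using arcs_near[OF ca] that(1) by simp
    have "arc_image ca \<inter> S = {}"
    proof (rule ccontr)
      assume "arc_image ca \<inter> S \<noteq> {}"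
      then obtain z where "z \<in> arc_image ca" "z \<in> S"
        by blast
      then have "dist a z < s" "dist x0 z \<le> M"
        using image S by auto
      then have "dist x0 a < M + s"
        using dist_triangle[of x0 a z] dist_commute[of z a] by linarith
      then show False
        using that(2) by simp
    qed
    moreover have "a \<in> arc_image ca" "b \<in> arc_image ca"
      using coarse_arc_ends_in_arc_image[OF ca(2)] by simp_all
    ultimately show ?thesis
      using small_arcs[OF ca(1)] by (auto simp: small_def)
  qed
  then show thesis
    using that by blast
qed

lemma closure_bounded_pairs_Inl:
  fixes TW :: "'b topology"
  assumes "proper_metric TYPE('a::metric_space)" "admissible f TW"
    "hausdorff_compactification f TW"
    and bounded: "\<And>a b. (a, b) \<in> e \<Longrightarrow> dist a b \<le> R"
    and closure: "(Inl (x::'a), q) \<in> prod_topology (sum_top f TW) (sum_top f TW) closure_of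
      (\<lambda>(x, y). (Inl x, Inl y)) ` e"
  shows "q \<in> range Inl"
proof (rule ccontr)
  let ?K = "sum_top f TW"
  assume q: "q \<notin> range Inl"
  have "(Inl x, q) \<in> topspace (prod_topology ?K ?K)"
    by (rule closure_of_subset_topspace[THEN subsetD, OF closure])
  then have q_far: "q \<in> topspace ?K - Inl ` cball x (R + 1)"
    using q by auto
  have "compact (cball x (R + 1))"
    using assms(1) by (simp add: proper_metric_def)
  then have far: "openin ?K (topspace ?K - Inl ` cball x (R + 1))"
    using closedin_sum_top_Inl_compact[OF assms(2,3)] by (simp add: openin_diff)
  let ?near = "Inl ` ball x 1 :: ('a + 'b) set"
  have near: "openin ?K ?near" "Inl x \<in> ?near"
    using openin_sum_top_Inl_open[OF assms(2,3)] by simp_all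
  obtain a b where "(a, b) \<in> e" "Inl a \<in> ?near" "Inl b \<in> topspace ?K - Inl ` cball x (R + 1)"
    using closure_of_Inl_pairs_meets_Times[OF closure near(1) far near(2) q_far] by metis
  then have "dist x a < 1" "R + 1 < dist x b" "dist a b \<le> R"
    using bounded by (auto simp: image_iff)
  then show False
    using dist_triangle[of x b a] by simp
qed

lemma closure_bounded_pairs_eq:
  assumes "proper_metric TYPE('a::metric_space)" "admissible f TW"
    "hausdorff_compactification f TW" "coarse_Karlsson f TW"
    and bounded: "\<And>a b. (a, b) \<in> e \<Longrightarrow> dist a b \<le> R"
    and closure: "(p, q) \<in> prod_topology (sum_top f TW) (sum_top f TW) closure_of
      (\<lambda>(x::'a, y). (Inl x, Inl y)) ` e"
    and p: "p \<notin> range Inl"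
  shows "p = q"
proof (rule ccontr)
  let ?K = "sum_top f TW"
  assume "p \<noteq> q"
  have Hausdorff: "Hausdorff_space ?K" and "compact_space ?K"
    using assms(3) by (auto simp: hausdorff_compactification_def)
  then have regular: "regular_space ?K"
    by (simp add: compact_Hausdorff_imp_regular_space)
  have "(p, q) \<in> topspace (prod_topology ?K ?K)"
    by (rule closure_of_subset_topspace[THEN subsetD, OF closure])
  then obtain V1 V2 where V: "openin ?K V1" "openin ?K V2" "p \<in> V1" "q \<in> V2"
      and separated: "disjnt (?K closure_of V1) (?K closure_of V2)"
    using Hausdorff_regular_separation_closure_of[OF Hausdorff regular _ _ \<open>p \<noteq> q\<close>] by auto
  define u where "u = topspace ?K \<times> topspace ?K - (?K closure_of V1) \<times> (?K closure_of V2)"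
  have "u \<in> unif ?K"
    unfolding u_def using separated by (simp add: Diff_Times_closedin_in_unif)
  then obtain x0 N where small: "\<And>a b. dist a b \<le> R \<Longrightarrow> N < dist x0 a \<Longrightarrow> (Inl a, Inl b) \<in> u"
    using coarse_Karlsson_far_pairs_in_unif[OF assms(4)] by metis
  have "compact (cball x0 N)"
    using assms(1) by (simp add: proper_metric_def)
  then have "openin ?K (V1 - Inl ` cball x0 N)"
    using V(1) closedin_sum_top_Inl_compact[OF assms(2,3)] by (simp add: openin_diff)
  moreover have "p \<in> V1 - Inl ` cball x0 N"
    using V(3) p by blast
  ultimately obtain a b where "(a, b) \<in> e" "Inl a \<in> V1 - Inl ` cball x0 N" "Inl b \<in> V2"
    using closure_of_Inl_pairs_meets_Times[OF closure _ V(2) _ V(4)] by blast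
  then have ab: "(a, b) \<in> e" "Inl a \<in> V1" "N < dist x0 a" "Inl b \<in> V2"
    by auto
  have "Inl a \<in> ?K closure_of V1" "Inl b \<in> ?K closure_of V2"
    using ab(2,4) V(1,2) by (meson closure_of_subset openin_subset subsetD)+
  then show False
    using small[OF bounded[OF ab(1)] ab(3)] by (simp add: u_def)
qed

theorem mainTheorem16:
  fixes f :: "'a::metric_space set \<Rightarrow> 'b set" and TW :: "'b topology"
  assumes "proper_metric TYPE('a)"
    and "admissible f TW"
    and "hausdorff_compactification f TW"
    and "coarse_Karlsson f TW"
  shows "Pers f TW"
  unfolding Pers_def
proof (intro conjI ballI)
  show "hausdorff_compactification f TW" by fact
  fix e :: "('a \<times> 'a) set"
  assume "e \<in> bounded_coarse"
  then obtain R where R: "\<And>a b. (a, b) \<in> e \<Longrightarrow> dist a b \<le> R"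
    unfolding bounded_coarse_def by fast
  show "perspective f TW e"
    unfolding perspective_def
  proof
    fix P
    assume P: "P \<in> prod_topology (sum_top f TW) (sum_top f TW) closure_of
        (\<lambda>(x, y). (Inl x, Inl y)) ` e \<inter>
        (sum_carrier TW \<times> sum_carrier TW - range Inl \<times> range Inl)"
    then obtain p q where pq: "P = (p, q)" "p \<in> sum_carrier TW" "\<not> (p \<in> range Inl \<and> q \<in> range Inl)"
        and closure: "(p, q) \<in> prod_topology (sum_top f TW) (sum_top f TW) closure_of
          (\<lambda>(x, y). (Inl x, Inl y)) ` e"
      by (cases P) auto
    have p: "p \<notin> range Inl"
      using closure_bounded_pairs_Inl[OF assms(1-3) R] closure pq(3) by blast
    moreover have "p = q"
      by (rule closure_bounded_pairs_eq[OF assms R closure p])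
    ultimately show "P \<in> {(p, p) |p. p \<in> Inr ` topspace TW}"
      using pq(1,2) by (auto simp: sum_carrier_def)
  qed
qed

end
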